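(* Let $(X,d)$ be a complete metric space, let $E,F:(0,\infty)\to\mathbb{R}$ satisfy condition $(C_2)$ below, and let $T:X\to X$ be a contractive mapping such that for all $x,y\in X$ with $Tx\neq Ty$, $F(d(Tx,Ty))\le E(d(x,y))$. Then $T$ is a CJMP-contraction, and hence $T$ is a Picard operator. Condition $(C_2)$: for every $t>0$, every sequence $(t_n)_{n\in\mathbb{N}}\subset(t,\infty)$ with $t_n\to t$, and every sequence $(s_n)_{n\in\mathbb{N}}$ with $t<s_n<t_n$ for all $n$, one has $\limsup_{n\to\infty}(F(s_n)-E(t_n))>0$.
   Context: A map $T:X\to X$ is contractive if $d(Tx,Ty)<d(x,y)$ for all $x\neq y$. $T$ is a CJMP-contraction if it is contractive and for every $\varepsilon>0$ there exists $\delta>0$ such that for all $x,y\in X$, $\varepsilon<d(x,y)<\varepsilon+\delta$ implies $d(Tx,Ty)\le\varepsilon$. $T$ is a Picard operator if $T$ has a unique fixed point $u\in X$ and for every $x\in X$ the sequence $(T^nx)_{n\in\mathbb{N}}$ converges to $u$. *)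

theory Defs
  imports "HOL-Analysis.Analysis"
begin

definition contractive :: "('a::metric_space \<Rightarrow> 'a) \<Rightarrow> bool" where
  "contractive T \<longleftrightarrow> (\<forall>x y. x \<noteq> y \<longrightarrow> dist (T x) (T y) < dist x y)"

definition cjmp_contraction :: "('a::metric_space \<Rightarrow> 'a) \<Rightarrow> bool" where
  "cjmp_contraction T \<longleftrightarrow> contractive T \<and>
     (\<forall>\<epsilon>>0. \<exists>\<delta>>0. \<forall>x y. \<epsilon> < dist x y \<and> dist x y < \<epsilon> + \<delta> \<longrightarrow> dist (T x) (T y) \<le> \<epsilon>)"

definition picard_operator :: "('a::metric_space \<Rightarrow> 'a) \<Rightarrow> bool" where
  "picard_operator T \<longleftrightarrow> (\<exists>!u. T u = u) \<and>
     (\<forall>u. T u = u \<longrightarrow> (\<forall>x. (\<lambda>n. (T ^^ n) x) \<longlonglongrightarrow> u))"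

text \<open>Condition (C2) for functions E, F defined on (0,\<infinity>) (values elsewhere irrelevant).\<close>
definition cond_C2 :: "(real \<Rightarrow> real) \<Rightarrow> (real \<Rightarrow> real) \<Rightarrow> bool" where
  "cond_C2 E F \<longleftrightarrow> (\<forall>t>0. \<forall>tn sn :: nat \<Rightarrow> real.
      (\<forall>n. t < tn n) \<longrightarrow> tn \<longlonglongrightarrow> t \<longrightarrow> (\<forall>n. t < sn n \<and> sn n < tn n) \<longrightarrow>
      limsup (\<lambda>n. ereal (F (sn n) - E (tn n))) > 0)"

end

theory Submission
  imports Defs
begin

text \<open>If the CJMP condition failed at some \<open>\<epsilon> > 0\<close>, there would be pairs \<open>(x\<^sub>n, y\<^sub>n)\<close> with
  \<open>t\<^sub>n = d(x\<^sub>n, y\<^sub>n) \<down> \<epsilon>\<close> and \<open>\<epsilon> < s\<^sub>n = d(T x\<^sub>n, T y\<^sub>n) < t\<^sub>n\<close>; the hypothesis on \<open>T\<close> gives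
  \<open>F(s\<^sub>n) - E(t\<^sub>n) \<le> 0\<close>, contradicting \<open>(C\<^sub>2)\<close>. A CJMP contraction is a Picard operator: the
  steps \<open>d(T\<^sup>n x, T\<^sup>n\<^sup>+\<^sup>1 x)\<close> decrease to a limit \<open>r\<close>, which must be \<open>0\<close> because the CJMP condition
  at \<open>r\<close> would push them below \<open>r\<close>; once the steps are below \<open>\<delta> \<le> \<epsilon>\<close>, the CJMP condition keeps the
  whole tail of the orbit inside the ball of radius \<open>\<epsilon> + \<delta>\<close> around \<open>T\<^sup>N x\<close>, so orbits are Cauchy.\<close>

lemma contractive_dist_le:
  assumes "contractive T"
  shows "dist (T x) (T y) \<le> dist x y"
  using assms unfolding contractive_def
  by (cases "x = y") (auto intro: less_imp_le)

lemma contractive_isCont: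
  assumes "contractive T"
  shows "isCont T x"
proof -
  have "1-lipschitz_on UNIV T"
    by (rule lipschitz_onI) (simp_all add: contractive_dist_le[OF assms])
  then show ?thesis
    using lipschitz_on_continuous_on continuous_on_eq_continuous_at by blast
qed

lemma contractive_fixed_point_unique:
  assumes "contractive T" and "T u = u" and "T v = v"
  shows "u = v"
  using assms unfolding contractive_def by (metis less_irrefl)

lemma cjmp_step_dist_tendsto_0:
  assumes "cjmp_contraction T"
  shows "(\<lambda>n. dist ((T ^^ n) x) ((T ^^ Suc n) x)) \<longlonglongrightarrow> 0"
proof -
  have C: "contractive T"
    and H: "\<And>\<epsilon>. \<epsilon> > 0 \<Longrightarrow> \<exists>\<delta>>0. \<forall>x y. \<epsilon> < dist x y \<and> dist x y < \<epsilon> + \<delta> \<longrightarrow> dist (T x) (T y) \<le> \<epsilon>"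
    using assms unfolding cjmp_contraction_def by blast+
  define d where "d n = dist ((T ^^ n) x) ((T ^^ Suc n) x)" for n
  have d_Suc: "d (Suc n) = dist (T ((T ^^ n) x)) (T ((T ^^ Suc n) x))" for n
    by (simp add: d_def)
  have "d (Suc n) \<le> d n" for n
    unfolding d_Suc unfolding d_def by (rule contractive_dist_le[OF C])
  then have "decseq d" by (rule decseq_SucI)
  then obtain r where r: "d \<longlonglongrightarrow> r" "\<And>n. r \<le> d n"
    using decseq_convergent[of d 0] by (auto simp: d_def)
  have "r = 0"
  proof (rule ccontr)
    assume "r \<noteq> 0"
    moreover have "0 \<le> r"
      using r(1) by (rule Lim_bounded2[of _ _ 0]) (simp add: d_def)
    ultimately have "r > 0" by simp
    have r_less: "r < d n" for n
    proof -
      have "(T ^^ n) x \<noteq> (T ^^ Suc n) x"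
        using r(2)[of n] \<open>r > 0\<close> by (auto simp: d_def)
      then have "d (Suc n) < d n"
        unfolding d_Suc unfolding d_def by (rule C[unfolded contractive_def, rule_format])
      then show ?thesis using r(2)[of "Suc n"] by linarith
    qed
    obtain \<delta> where "\<delta> > 0"
      and \<delta>: "\<forall>x y. r < dist x y \<and> dist x y < r + \<delta> \<longrightarrow> dist (T x) (T y) \<le> r"
      using H[OF \<open>r > 0\<close>] by blast
    have "eventually (\<lambda>n. d n < r + \<delta>) sequentially"
      using order_tendstoD(2)[OF r(1)] \<open>\<delta> > 0\<close> by simp
    then obtain n where "d n < r + \<delta>"
      by (auto simp: eventually_sequentially)
    then have "d (Suc n) \<le> r"
      unfolding d_Suc using \<delta> r_less[of n] unfolding d_def by blast
    then show False using r_less[of "Suc n"] by linarith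
  qed
  then show ?thesis using r(1) by (simp add: d_def[abs_def])
qed

lemma cjmp_orbit_Cauchy:
  assumes "cjmp_contraction T"
  shows "Cauchy (\<lambda>n. (T ^^ n) x)"
  unfolding Cauchy_altdef2
proof (intro allI impI)
  fix e :: real
  assume "e > 0"
  define s where "s n = (T ^^ n) x" for n
  define \<epsilon> where "\<epsilon> = e / 2"
  have C: "contractive T" using assms unfolding cjmp_contraction_def by blast
  have "\<epsilon> > 0" using \<open>e > 0\<close> by (simp add: \<epsilon>_def)
  then obtain \<delta>\<^sub>0 where "\<delta>\<^sub>0 > 0"
    and \<delta>\<^sub>0: "\<forall>x y. \<epsilon> < dist x y \<and> dist x y < \<epsilon> + \<delta>\<^sub>0 \<longrightarrow> dist (T x) (T y) \<le> \<epsilon>"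
    using assms unfolding cjmp_contraction_def by blast
  define \<delta> where "\<delta> = min \<delta>\<^sub>0 \<epsilon>"
  have "\<delta> > 0" using \<open>\<delta>\<^sub>0 > 0\<close> \<open>e > 0\<close> by (simp add: \<delta>_def \<epsilon>_def)
  then obtain N where N: "\<And>n. n \<ge> N \<Longrightarrow> dist (s n) (s (Suc n)) < \<delta>"
    using order_tendstoD(2)[OF cjmp_step_dist_tendsto_0[OF assms], of \<delta>]
    by (auto simp: s_def eventually_sequentially)
  have tail: "dist (s N) (s m) < \<epsilon> + \<delta>" if "N \<le> m" for m
    using that
  proof (induction m rule: dec_induct)
    case base
    then show ?case using \<open>\<delta> > 0\<close> \<open>e > 0\<close> by (simp add: \<epsilon>_def)
  next
    case (step m)
    have "dist (T (s N)) (T (s m)) \<le> \<epsilon>"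
    proof (cases "dist (s N) (s m) \<le> \<epsilon>")
      case True
      then show ?thesis using contractive_dist_le[OF C, of "s N" "s m"] by linarith
    next
      case False
      then show ?thesis using \<delta>\<^sub>0 step.IH by (auto simp: \<delta>_def)
    qed
    then have "dist (s (Suc N)) (s (Suc m)) \<le> \<epsilon>" by (simp add: s_def)
    moreover have "dist (s N) (s (Suc N)) < \<delta>" using N by simp
    ultimately show ?case
      using dist_triangle[of "s N" "s (Suc m)" "s (Suc N)"] by linarith
  qed
  show "\<exists>N. \<forall>n\<ge>N. dist ((T ^^ n) x) ((T ^^ N) x) < e"
  proof (intro exI allI impI)
    fix n assume "N \<le> n"
    then show "dist ((T ^^ n) x) ((T ^^ N) x) < e"
      using tail[of n] by (simp add: s_def dist_commute \<delta>_def \<epsilon>_def)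
  qed
qed

lemma cjmp_orbit_tendsto_fixed_point:
  fixes T :: "'a::complete_space \<Rightarrow> 'a"
  assumes "cjmp_contraction T"
  obtains u where "(\<lambda>n. (T ^^ n) x) \<longlonglongrightarrow> u" and "T u = u"
proof -
  have C: "contractive T" using assms unfolding cjmp_contraction_def by blast
  obtain u where u: "(\<lambda>n. (T ^^ n) x) \<longlonglongrightarrow> u"
    using Cauchy_convergent[OF cjmp_orbit_Cauchy[OF assms]] by (auto simp: convergent_def)
  have "(\<lambda>n. T ((T ^^ n) x)) \<longlonglongrightarrow> T u"
    by (rule isCont_tendsto_compose[OF contractive_isCont[OF C] u])
  moreover have "(\<lambda>n. T ((T ^^ n) x)) \<longlonglongrightarrow> u"
    using LIMSEQ_Suc[OF u] by simp
  ultimately have "T u = u" by (rule LIMSEQ_unique)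
  then show ?thesis using that u by blast
qed

lemma cjmp_contraction_picard_operator:
  fixes T :: "'a::complete_space \<Rightarrow> 'a"
  assumes "cjmp_contraction T"
  shows "picard_operator T"
proof -
  have C: "contractive T" using assms unfolding cjmp_contraction_def by blast
  obtain u where "T u = u"
    using cjmp_orbit_tendsto_fixed_point[OF assms] by blast
  moreover have "(\<lambda>n. (T ^^ n) x) \<longlonglongrightarrow> v" if "T v = v" for v x
  proof -
    obtain w where "(\<lambda>n. (T ^^ n) x) \<longlonglongrightarrow> w" and "T w = w"
      using cjmp_orbit_tendsto_fixed_point[OF assms] by blast
    then show ?thesis using contractive_fixed_point_unique[OF C _ that] by blast
  qed
  ultimately show ?thesis
    unfolding picard_operator_def using contractive_fixed_point_unique[OF C] by blast
qed

lemma cond_C2_cjmp_contraction: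
  assumes C2: "cond_C2 E F"
    and C: "contractive T"
    and FE: "\<And>x y. T x \<noteq> T y \<Longrightarrow> F (dist (T x) (T y)) \<le> E (dist x y)"
  shows "cjmp_contraction T"
proof -
  have "\<exists>\<delta>>0. \<forall>x y. \<epsilon> < dist x y \<and> dist x y < \<epsilon> + \<delta> \<longrightarrow> dist (T x) (T y) \<le> \<epsilon>"
    if "\<epsilon> > 0" for \<epsilon>
  proof (rule ccontr)
    assume "\<not> ?thesis"
    then have "\<exists>x y. \<epsilon> < dist x y \<and> dist x y < \<epsilon> + \<delta> \<and> \<epsilon> < dist (T x) (T y)"
      if "\<delta> > 0" for \<delta>
      using that by (meson not_le)
    then have "\<forall>n. \<exists>x y. \<epsilon> < dist x y \<and> dist x y < \<epsilon> + inverse (Suc n) \<and> \<epsilon> < dist (T x) (T y)"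
      by simp
    then obtain x y where xy: "\<And>n. \<epsilon> < dist (x n) (y n)"
      "\<And>n. dist (x n) (y n) < \<epsilon> + inverse (Suc n)" "\<And>n. \<epsilon> < dist (T (x n)) (T (y n))"
      by (auto simp: choice_iff)
    define t where "t n = dist (x n) (y n)" for n
    define s where "s n = dist (T (x n)) (T (y n))" for n
    have t_gt: "\<epsilon> < t n" for n
      using xy(1) by (simp add: t_def)
    have "t \<longlonglongrightarrow> \<epsilon>"
    proof (rule real_tendsto_sandwich[OF _ _ tendsto_const LIMSEQ_inverse_real_of_nat_add])
      show "\<forall>\<^sub>F n in sequentially. \<epsilon> \<le> t n"
        using t_gt by (simp add: less_imp_le)
      show "\<forall>\<^sub>F n in sequentially. t n \<le> \<epsilon> + inverse (Suc n)"
        using xy(2) by (simp add: t_def less_imp_le)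
    qed
    moreover have "\<epsilon> < s n \<and> s n < t n" for n
    proof -
      have "x n \<noteq> y n" using xy(1)[of n] \<open>\<epsilon> > 0\<close> by auto
      then have "s n < t n" using C unfolding contractive_def s_def t_def by blast
      then show ?thesis using xy(3)[of n] by (simp add: s_def)
    qed
    ultimately have "limsup (\<lambda>n. ereal (F (s n) - E (t n))) > 0"
      using C2 \<open>\<epsilon> > 0\<close> t_gt unfolding cond_C2_def by blast
    moreover have "F (s n) - E (t n) \<le> 0" for n
    proof -
      have "T (x n) \<noteq> T (y n)" using xy(3)[of n] \<open>\<epsilon> > 0\<close> by auto
      then show ?thesis using FE unfolding s_def t_def by fastforce
    qed
    then have "limsup (\<lambda>n. ereal (F (s n) - E (t n))) \<le> 0"
      by (intro Limsup_bounded always_eventually) (simp add: zero_ereal_def)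
    ultimately show False by simp
  qed
  then show ?thesis using C unfolding cjmp_contraction_def by blast
qed

theorem mainTheorem3:
  fixes T :: "'a::{metric_space, complete_space} \<Rightarrow> 'a"
    and E F :: "real \<Rightarrow> real"
  assumes "cond_C2 E F"
    and "contractive T"
    and "\<And>x y. T x \<noteq> T y \<Longrightarrow> F (dist (T x) (T y)) \<le> E (dist x y)"
  shows "cjmp_contraction T \<and> picard_operator T"
proof -
  have "cjmp_contraction T"
    by (rule cond_C2_cjmp_contraction[OF assms])
  then show ?thesis using cjmp_contraction_picard_operator by blast
qed

end
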